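(* Let $\mathcal{X}\subseteq\mathbb{R}^d$ be nonempty, closed and convex, let $f:\mathbb{R}^d\to\mathbb{R}$ be differentiable (not necessarily convex), and assume the set $\mathcal{X}_\star:=\operatorname{arg\,min}_{x\in\mathcal{X}} f(x)$ is nonempty. Fix $x_k\in\mathcal{X}$ and $x_\star\in\mathcal{X}_\star$, and suppose that one of the following two conditions holds: (Type I) $\nabla f(x_k)\neq 0$ and $0<t_k\le \dfrac{\langle \nabla f(x_k),x_k-x_\star\rangle}{\|\nabla f(x_k)\|}$; (Type II) $\nabla f(x_k)\neq\nabla f(x_\star)$ and $0<t_k\le \dfrac{\langle \nabla f(x_k)-\nabla f(x_\star),x_k-x_\star\rangle}{\|\nabla f(x_k)-\nabla f(x_\star)\|}$. Let $x_{k+1}\in\operatorname{arg\,min}_{z\in\mathcal{X}\cap\mathcal{B}(x_k,t_k)}\langle\nabla f(x_k),z\rangle$. Then: (i) $t_k\le\|x_k-x_\star\|$; (ii) $\|x_{k+1}-x_k\|=t_k$; (iii) $\|x_{k+1}-x_\star\|^2\le\|x_k-x_\star\|^2-t_k^2$.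
   Context: $\|\cdot\|$ is the Euclidean norm and $\langle\cdot,\cdot\rangle$ the standard inner product on $\mathbb{R}^d$; $\mathcal{B}(x,t):=\{y\in\mathbb{R}^d:\|y-x\|\le t\}$. *)

theory Defs
  imports "HOL-Analysis.Analysis"
begin

end

theory Submission
  imports Defs
begin

(*
  With g = grad f(x_k), both step-size rules read t <= <g - c, x_k - x_star> / |g - c|, with
  c = 0 or c = grad f(x_star); in both cases <c, z - x_star> >= 0 on X by first-order optimality
  of x_star. The bound on t puts the open ball B(x_k, t) into the half-space
  <g - c, z> > <g - c, x_star>. A point of the segment (x_{k+1}, x_star] inside that ball would be
  feasible, so minimality of x_{k+1} would give <g, x_star - x_{k+1}> >= 0, hence
  <g - c, x_star - x_{k+1}> >= 0, contradicting the half-space inclusion. A segment that starts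
  in the closed ball and then avoids the open ball starts on the sphere and leaves it at a
  non-acute angle to the radius, which gives (ii) and, by Pythagoras, (iii).
*)

lemma has_derivative_min_on_convex:
  fixes f :: "'a::real_normed_vector \<Rightarrow> real"
  assumes f': "(f has_derivative f') (at x within S)"
    and "convex S" "x \<in> S" "y \<in> S" and min: "\<And>z. z \<in> S \<Longrightarrow> f x \<le> f z"
  shows "0 \<le> f' (y - x)"
proof -
  define \<gamma> where "\<gamma> s = x + s *\<^sub>R (y - x)" for s :: real
  have "\<gamma> ` {0..1} \<subseteq> S"
    using \<open>convex S\<close> \<open>x \<in> S\<close> \<open>y \<in> S\<close> by (auto simp: \<gamma>_def convex_alt algebra_simps)
  have "(\<gamma> has_derivative (\<lambda>s. s *\<^sub>R (y - x))) (at 0 within {0..1})"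
    unfolding \<gamma>_def by (intro derivative_eq_intros) auto
  moreover have "(f has_derivative f') (at (\<gamma> 0) within \<gamma> ` {0..1})"
    using has_derivative_subset[OF f' \<open>\<gamma> ` {0..1} \<subseteq> S\<close>] by (simp add: \<gamma>_def)
  ultimately have "((f \<circ> \<gamma>) has_derivative f' \<circ> (\<lambda>s. s *\<^sub>R (y - x))) (at 0 within {0..1})"
    by (rule diff_chain_within)
  moreover have "f' \<circ> (\<lambda>s. s *\<^sub>R (y - x)) = (\<lambda>s. f' (y - x) * s)"
    using has_derivative_bounded_linear[OF f'] by (auto simp: o_def linear_simps)
  ultimately have "((f \<circ> \<gamma>) has_field_derivative f' (y - x)) (at_right 0)"
    by (simp add: has_field_derivative_def at_within_Icc_at_right)
  then have "((\<lambda>s. (f (\<gamma> s) - f x) / s) \<longlongrightarrow> f' (y - x)) (at_right 0)"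
    by (simp add: has_field_derivative_iff \<gamma>_def)
  moreover have "\<forall>\<^sub>F s in at_right 0. 0 \<le> (f (\<gamma> s) - f x) / s"
    using eventually_at_right_real[OF zero_less_one]
  proof eventually_elim
    case (elim s)
    then have "\<gamma> s \<in> S"
      using \<open>\<gamma> ` {0..1} \<subseteq> S\<close> by auto
    with elim show ?case
      using min by simp
  qed
  ultimately show ?thesis
    by (rule tendsto_lowerbound) simp
qed

lemma segment_avoids_ball:
  fixes c p q :: "'a::real_inner"
  assumes p: "dist c p \<le> r"
    and avoids: "\<And>s. 0 < s \<Longrightarrow> s \<le> 1 \<Longrightarrow> r \<le> dist c (p + s *\<^sub>R (q - p))"
  shows "dist c p = r" and "r\<^sup>2 + (dist p q)\<^sup>2 \<le> (dist c q)\<^sup>2"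
proof -
  define u where "u = p - c"
  define w where "w = q - p"
  have near_0: "\<forall>\<^sub>F s in at_right 0. r \<le> norm (u + s *\<^sub>R w)"
    using eventually_at_right_real[OF zero_less_one]
    by eventually_elim
      (use avoids in \<open>auto simp: u_def w_def dist_norm norm_minus_commute algebra_simps\<close>)
  have "((\<lambda>s. norm (u + s *\<^sub>R w)) \<longlongrightarrow> norm (u + 0 *\<^sub>R w)) (at_right 0)"
    by (intro tendsto_intros)
  then have "r \<le> norm u"
    using near_0 by (auto intro: tendsto_lowerbound)
  then show r: "dist c p = r"
    using p by (simp add: u_def dist_norm norm_minus_commute)
  have expand: "(norm (u + s *\<^sub>R w))\<^sup>2 = (norm u)\<^sup>2 + s * (2 * (u \<bullet> w) + s * (norm w)\<^sup>2)" for s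
    by (simp add: power2_norm_eq_inner inner_commute algebra_simps)
  have "\<forall>\<^sub>F s in at_right 0. 0 \<le> 2 * (u \<bullet> w) + s * (norm w)\<^sup>2"
    using near_0 eventually_at_right_real[OF zero_less_one]
  proof eventually_elim
    case (elim s)
    then have "(norm u)\<^sup>2 \<le> (norm (u + s *\<^sub>R w))\<^sup>2"
      using r by (auto simp: u_def dist_norm norm_minus_commute intro: power_mono)
    with elim show ?case
      by (simp add: expand zero_le_mult_iff)
  qed
  moreover have "((\<lambda>s. 2 * (u \<bullet> w) + s * (norm w)\<^sup>2) \<longlongrightarrow> 2 * (u \<bullet> w) + 0 * (norm w)\<^sup>2) (at_right 0)"
    by (intro tendsto_intros)
  ultimately have "0 \<le> u \<bullet> w"
    by (auto dest: tendsto_lowerbound)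
  then show "r\<^sup>2 + (dist p q)\<^sup>2 \<le> (dist c q)\<^sup>2"
    using expand[of 1] r
    by (simp add: u_def w_def dist_norm norm_minus_commute)
qed

lemma ball_subset_open_halfspace:
  fixes h x y :: "'a::real_inner"
  assumes "h \<noteq> 0" and "t * norm h \<le> h \<bullet> (x - y)"
  shows "ball x t \<subseteq> {z. h \<bullet> y < h \<bullet> z}"
proof
  fix z assume "z \<in> ball x t"
  then have "norm h * norm (z - x) < t * norm h"
    using \<open>h \<noteq> 0\<close> by (simp add: dist_norm norm_minus_commute mult.commute)
  moreover have "- (norm h * norm (z - x)) \<le> h \<bullet> (z - x)"
    using norm_cauchy_schwarz[of "-h" "z - x"] by simp
  ultimately have "0 < h \<bullet> (z - x) + h \<bullet> (x - y)"
    using assms(2) by linarith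
  then show "z \<in> {z. h \<bullet> y < h \<bullet> z}"
    by (simp add: inner_diff_right)
qed

lemma linear_argmin_on_cball_segment_avoids_ball:
  fixes g c x y z :: "'a::real_inner"
  assumes "convex X" "y \<in> X"
    and z: "z \<in> X \<inter> cball x t"
    and z_min: "\<And>w. w \<in> X \<inter> cball x t \<Longrightarrow> g \<bullet> z \<le> g \<bullet> w"
    and c: "0 \<le> c \<bullet> (z - y)"
    and halfspace: "ball x t \<subseteq> {w. (g - c) \<bullet> y < (g - c) \<bullet> w}"
    and s: "0 < s" "s \<le> 1"
  shows "t \<le> dist x (z + s *\<^sub>R (y - z))"
proof (rule ccontr)
  let ?w = "z + s *\<^sub>R (y - z)"
  assume "\<not> t \<le> dist x ?w"
  then have w_ball: "?w \<in> ball x t"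
    by simp
  have "?w = (1 - s) *\<^sub>R z + s *\<^sub>R y"
    by (simp add: algebra_simps)
  then have "?w \<in> X"
    using \<open>convex X\<close> \<open>y \<in> X\<close> z s by (simp add: convex_def)
  with w_ball have "g \<bullet> z \<le> g \<bullet> ?w"
    by (intro z_min) auto
  then have "0 \<le> g \<bullet> (y - z)"
    using s by (simp add: inner_add_right inner_diff_right zero_le_mult_iff)
  with c have "0 \<le> (g - c) \<bullet> (y - z)"
    by (simp add: inner_diff_left inner_diff_right)
  then have "(g - c) \<bullet> ?w \<le> (g - c) \<bullet> y"
    using s mult_left_le_one_le[of "(g - c) \<bullet> (y - z)" s]
    by (simp add: algebra_simps)
  with w_ball halfspace show False
    by auto
qed

lemma linear_argmin_on_cball_step:
  fixes g c x y z :: "'a::real_inner"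
  assumes "convex X" "y \<in> X"
    and c: "\<And>w. w \<in> X \<Longrightarrow> 0 \<le> c \<bullet> (w - y)"
    and "g \<noteq> c" and t: "t \<le> (g - c) \<bullet> (x - y) / norm (g - c)"
    and z: "z \<in> X \<inter> cball x t"
    and z_min: "\<And>w. w \<in> X \<inter> cball x t \<Longrightarrow> g \<bullet> z \<le> g \<bullet> w"
  shows "t \<le> dist x y" and "dist x z = t" and "(dist z y)\<^sup>2 \<le> (dist x y)\<^sup>2 - t\<^sup>2"
proof -
  have t': "t * norm (g - c) \<le> (g - c) \<bullet> (x - y)"
    using t \<open>g \<noteq> c\<close> by (simp add: pos_le_divide_eq)
  also have "\<dots> \<le> dist x y * norm (g - c)"
    using norm_cauchy_schwarz[of "g - c" "x - y"] by (simp add: dist_norm mult.commute)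
  finally show "t \<le> dist x y"
    using \<open>g \<noteq> c\<close> by simp
  have "ball x t \<subseteq> {w. (g - c) \<bullet> y < (g - c) \<bullet> w}"
    using \<open>g \<noteq> c\<close> t' by (intro ball_subset_open_halfspace) auto
  then have "t \<le> dist x (z + s *\<^sub>R (y - z))" if "0 < s" "s \<le> 1" for s
    using linear_argmin_on_cball_segment_avoids_ball[OF \<open>convex X\<close> \<open>y \<in> X\<close> z z_min]
      c[of z] z that by auto
  moreover have "dist x z \<le> t"
    using z by simp
  ultimately show "dist x z = t" and "(dist z y)\<^sup>2 \<le> (dist x y)\<^sup>2 - t\<^sup>2"
    using segment_avoids_ball[of x z t y] by auto
qed

theorem theorem1:
  fixes f :: "'a::euclidean_space \<Rightarrow> real"
    and grad :: "'a \<Rightarrow> 'a"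
    and X :: "'a set"
    and xk xs xk1 :: 'a
    and t :: real
  assumes X_ne: "X \<noteq> {}" and X_closed: "closed X" and X_convex: "convex X"
    and f_grad: "\<And>x. (f has_derivative (\<lambda>h. grad x \<bullet> h)) (at x)"
    and xk_in: "xk \<in> X"
    and xs_min: "xs \<in> X" "\<And>y. y \<in> X \<Longrightarrow> f xs \<le> f y"
    and step: "(grad xk \<noteq> 0 \<and> 0 < t \<and>
                 t \<le> (grad xk \<bullet> (xk - xs)) / norm (grad xk))
             \<or> (grad xk \<noteq> grad xs \<and> 0 < t \<and>
                 t \<le> ((grad xk - grad xs) \<bullet> (xk - xs)) / norm (grad xk - grad xs))"
    and xk1_min: "xk1 \<in> X \<inter> cball xk t"
      "\<And>z. z \<in> X \<inter> cball xk t \<Longrightarrow> grad xk \<bullet> xk1 \<le> grad xk \<bullet> z"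
  shows "t \<le> norm (xk - xs) \<and> norm (xk1 - xk) = t \<and>
         (norm (xk1 - xs))\<^sup>2 \<le> (norm (xk - xs))\<^sup>2 - t\<^sup>2"
proof -
  \<comment> \<open>Nonemptiness and closedness of X and xk \<in> X only serve to make xk1 exist.\<close>
  have first_order: "0 \<le> c \<bullet> (w - xs)" if "c = 0 \<or> c = grad xs" "w \<in> X" for c w
    using that has_derivative_min_on_convex[OF has_derivative_at_withinI[OF f_grad]
        X_convex xs_min(1) _ xs_min(2)] by auto
  have "t \<le> dist xk xs \<and> dist xk xk1 = t \<and> (dist xk1 xs)\<^sup>2 \<le> (dist xk xs)\<^sup>2 - t\<^sup>2"
    if "c = 0 \<or> c = grad xs" "grad xk \<noteq> c"
      "t \<le> (grad xk - c) \<bullet> (xk - xs) / norm (grad xk - c)" for c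
    using linear_argmin_on_cball_step[OF X_convex xs_min(1) first_order[OF that(1)] that(2,3)
        xk1_min] by blast
  from this[of 0] this[of "grad xs"] step show ?thesis
    by (auto simp: dist_norm norm_minus_commute)
qed

end
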